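(* The target discounted-sum problem TDS is decidable for every discount factor $\lambda\ge\frac12$, i.e., restricted to instances with $\frac12\le\lambda<1$.
   Context: An instance of TDS consists of a rational discount factor $0<\lambda<1$, a rational target $t$, and rational weights $a,b$; it asks whether there exists an infinite sequence $w\in\{a,b\}^\omega$ with $\sum_{i=0}^\infty w(i)\lambda^i=t$. *)

theory Defs
  imports Complex_Main "HOL-Library.Nat_Bijection"
begin

definition TDS :: "rat \<Rightarrow> rat \<Rightarrow> rat \<Rightarrow> rat \<Rightarrow> bool" where
  "TDS lam t a b \<longleftrightarrow>
     (\<exists>w :: nat \<Rightarrow> rat. (\<forall>i. w i \<in> {a, b}) \<and>
        (\<lambda>i. real_of_rat (w i) * real_of_rat lam ^ i) sums real_of_rat t)"

datatype recf =
    Zero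
  | Succ
  | Proj nat
  | Comp recf "recf list"
  | Prim recf recf
  | Mn recf

inductive reval :: "recf \<Rightarrow> nat list \<Rightarrow> nat \<Rightarrow> bool" where
  zero: "reval Zero xs 0"
| succ: "reval Succ (x # xs) (Suc x)"
| proj: "i < length xs \<Longrightarrow> reval (Proj i) xs (xs ! i)"
| comp: "list_all2 (\<lambda>g y. reval g xs y) gs ys \<Longrightarrow> reval f ys z \<Longrightarrow> reval (Comp f gs) xs z"
| prim0: "reval f xs y \<Longrightarrow> reval (Prim f g) (0 # xs) y"
| primS: "reval (Prim f g) (n # xs) r \<Longrightarrow> reval g (r # n # xs) y \<Longrightarrow>
           reval (Prim f g) (Suc n # xs) y"
| mn: "reval f (n # xs) 0 \<Longrightarrow> (\<forall>m<n. \<exists>y. y > 0 \<and> reval f (m # xs) y) \<Longrightarrow>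
        reval (Mn f) xs n"

definition rat_code :: "rat \<Rightarrow> nat" where
  "rat_code q = prod_encode (int_encode (fst (quotient_of q)), int_encode (snd (quotient_of q)))"

definition instance_code :: "rat \<Rightarrow> rat \<Rightarrow> rat \<Rightarrow> rat \<Rightarrow> nat" where
  "instance_code lam t a b =
     prod_encode (rat_code lam, prod_encode (rat_code t, prod_encode (rat_code a, rat_code b)))"

definition total_decider :: "recf \<Rightarrow> bool" where
  "total_decider f \<longleftrightarrow> (\<forall>n. reval f [n] 0 \<or> reval f [n] 1)"

end

theory Submission
  imports Defs
begin

(* For 1/2 <= lambda < 1 every x in [0, 1/(1 - lambda)] has a greedy expansion
   sum_i e_i lambda^i with digits e_i in {0, 1}: subtracting the digit and rescaling by 1/lambda
   keeps the remainder in [0, 1/(1 - lambda)] exactly because 1/lambda <= 1/(1 - lambda).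
   Hence the discounted sums of {a, b}-sequences fill the whole interval between a/(1 - lambda)
   and b/(1 - lambda), so TDS lam t a b holds iff t (1 - lambda) lies between a and b.
   After clearing denominators this is a Boolean combination of integer inequalities between
   the components of the instance code, which is primitive recursive: the decider needs only
   composition and primitive recursion, hence is total. *)

section \<open>Discounted sums of two-valued sequences\<close>

lemma geometric_sums_scaled:
  fixes l c :: real
  assumes "\<bar>l\<bar> < 1"
  shows "(\<lambda>i. c * l ^ i) sums (c / (1 - l))"
  using sums_mult[OF geometric_sums[of l], of c] assms by simp

lemma discounted_sum_bounds:
  fixes l m M T :: real
  assumes "0 \<le> l" and "l < 1" and "\<And>i. m \<le> w i \<and> w i \<le> M"
    and "(\<lambda>i. w i * l ^ i) sums T"
  shows "m \<le> T * (1 - l) \<and> T * (1 - l) \<le> M"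
proof -
  have l: "\<bar>l\<bar> < 1" "0 < 1 - l" using assms(1,2) by auto
  have "m * l ^ i \<le> w i * l ^ i" and "w i * l ^ i \<le> M * l ^ i" for i
    using assms(1,3) by (simp_all add: mult_right_mono)
  then have "m / (1 - l) \<le> T" and "T \<le> M / (1 - l)"
    by (intro sums_le[OF _ geometric_sums_scaled[OF l(1)] assms(4)]
        sums_le[OF _ assms(4) geometric_sums_scaled[OF l(1)]]; simp)+
  with l(2) show ?thesis by (simp add: field_simps)
qed

primrec greedy_remainder :: "real \<Rightarrow> real \<Rightarrow> nat \<Rightarrow> real" where
  "greedy_remainder l x 0 = x"
| "greedy_remainder l x (Suc n) =
     (greedy_remainder l x n - of_bool (1 \<le> greedy_remainder l x n)) / l"

lemma greedy_remainder_bounds: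
  assumes "1/2 \<le> l" and "l < 1" and "0 \<le> x" and "x \<le> 1 / (1 - l)"
  shows "0 \<le> greedy_remainder l x n \<and> greedy_remainder l x n \<le> 1 / (1 - l)"
proof (induction n)
  case 0
  show ?case using assms(3,4) by simp
next
  case (Suc n)
  define r where "r = greedy_remainder l x n"
  have l: "0 < l" "0 < 1 - l" using assms(1,2) by auto
  have r: "0 \<le> r" "r * (1 - l) \<le> 1" using Suc l by (simp_all add: r_def field_simps)
  show ?case
  proof (cases "1 \<le> r")
    case True
    then have "(r - 1) * (1 - l) \<le> l" using r(2) by (simp add: algebra_simps)
    with True l show ?thesis by (simp add: r_def[symmetric] field_simps)
  next
    case False
    \<comment> \<open>the only place where \<open>1/2 \<le> l\<close> is needed: a remainder below 1 may grow by the factor 1/l\<close>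
    then have "r * (1 - l) \<le> 1 - l" using mult_right_mono[of r 1 "1 - l"] l by simp
    then have "r * (1 - l) \<le> l" using assms(1) by linarith
    with False r(1) l show ?thesis by (simp add: r_def[symmetric] field_simps)
  qed
qed

lemma greedy_remainder_expansion:
  assumes "l \<noteq> 0"
  shows "x = (\<Sum>i<n. of_bool (1 \<le> greedy_remainder l x i) * l ^ i) + l ^ n * greedy_remainder l x n"
proof (induction n)
  case (Suc n)
  have "l ^ Suc n * greedy_remainder l x (Suc n) =
        l ^ n * greedy_remainder l x n - of_bool (1 \<le> greedy_remainder l x n) * l ^ n"
    using assms by (simp add: field_simps)
  with Suc show ?case by simp
qed simp

lemma greedy_expansion_sums:
  assumes "1/2 \<le> l" and "l < 1" and "0 \<le> x" and "x \<le> 1 / (1 - l)"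
  shows "(\<lambda>i. of_bool (1 \<le> greedy_remainder l x i) * l ^ i) sums x"
proof -
  let ?r = "greedy_remainder l x"
  have l: "0 < l" using assms(1) by simp
  have bound: "(\<lambda>n. l ^ n * (1 / (1 - l))) \<longlonglongrightarrow> 0"
    using LIMSEQ_power_zero[of l] l assms(2) by (auto intro: tendsto_mult_left_zero)
  have "(\<lambda>n. l ^ n * ?r n) \<longlonglongrightarrow> 0"
  proof (rule tendsto_sandwich[OF _ _ tendsto_const bound])
    show "\<forall>\<^sub>F n in sequentially. 0 \<le> l ^ n * ?r n"
      using greedy_remainder_bounds[OF assms] l by simp
    show "\<forall>\<^sub>F n in sequentially. l ^ n * ?r n \<le> l ^ n * (1 / (1 - l))"
      by (rule always_eventually, rule allI, rule mult_left_mono)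
        (use greedy_remainder_bounds[OF assms] l in auto)
  qed
  then have "(\<lambda>n. x - l ^ n * ?r n) \<longlonglongrightarrow> x"
    using tendsto_diff[OF tendsto_const] by fastforce
  moreover have "(\<Sum>i<n. of_bool (1 \<le> ?r i) * l ^ i) = x - l ^ n * ?r n" for n
    using greedy_remainder_expansion[of l x n] l by linarith
  ultimately show ?thesis
    unfolding sums_def by simp
qed

lemma discounted_sums_fill_interval:
  fixes l lo hi T :: real
  assumes "1/2 \<le> l" and "l < 1" and "lo \<le> T * (1 - l)" and "T * (1 - l) \<le> hi"
  shows "\<exists>e. (\<lambda>i. (lo + (hi - lo) * of_bool (e i)) * l ^ i) sums T"
proof -
  have l: "\<bar>l\<bar> < 1" "0 < 1 - l" using assms(1,2) by auto
  have T: "lo / (1 - l) \<le> T" "T \<le> hi / (1 - l)"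
    using assms(3,4) l(2) by (simp_all add: pos_divide_le_eq pos_le_divide_eq)
  show ?thesis
  proof (cases "lo = hi")
    case True
    with T have "T = lo / (1 - l)" by simp
    with geometric_sums_scaled[OF l(1), of lo] show ?thesis
      by (intro exI[of _ "\<lambda>_. False"]) simp
  next
    case False
    with assms(3,4) have D: "0 < hi - lo" by simp
    define x where "x = (T - lo / (1 - l)) / (hi - lo)"
    from T have N: "0 \<le> T - lo / (1 - l)" "T - lo / (1 - l) \<le> (hi - lo) / (1 - l)"
      by (simp_all add: diff_divide_distrib)
    have "x \<le> ((hi - lo) / (1 - l)) / (hi - lo)"
      unfolding x_def by (rule divide_right_mono[OF N(2)]) (use D in simp)
    with D N(1) have "0 \<le> x" and "x \<le> 1 / (1 - l)" by (simp_all add: x_def)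
    then have "(\<lambda>i. lo * l ^ i + (hi - lo) * (of_bool (1 \<le> greedy_remainder l x i) * l ^ i))
        sums (lo / (1 - l) + (hi - lo) * x)"
      by (intro sums_add geometric_sums_scaled[OF l(1)] sums_mult greedy_expansion_sums assms(1,2))
    moreover have "lo / (1 - l) + (hi - lo) * x = T" using D by (simp add: x_def)
    ultimately show ?thesis
      by (intro exI[of _ "\<lambda>i. 1 \<le> greedy_remainder l x i"]) (simp add: algebra_simps)
  qed
qed

lemma two_valued_discounted_sums_iff:
  fixes l m M T :: real
  assumes "1/2 \<le> l" and "l < 1"
  shows "(\<exists>w. (\<forall>i. w i \<in> {m, M}) \<and> (\<lambda>i. w i * l ^ i) sums T) \<longleftrightarrow>
         min m M \<le> T * (1 - l) \<and> T * (1 - l) \<le> max m M"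
proof
  assume "\<exists>w. (\<forall>i. w i \<in> {m, M}) \<and> (\<lambda>i. w i * l ^ i) sums T"
  then obtain w where w: "\<forall>i. w i \<in> {m, M}" and T: "(\<lambda>i. w i * l ^ i) sums T"
    by blast
  have "min m M \<le> w i \<and> w i \<le> max m M" for i
    using w by (cases "w i = m") auto
  with T assms show "min m M \<le> T * (1 - l) \<and> T * (1 - l) \<le> max m M"
    by (intro discounted_sum_bounds[of l]) auto
next
  assume "min m M \<le> T * (1 - l) \<and> T * (1 - l) \<le> max m M"
  then obtain e where "(\<lambda>i. (min m M + (max m M - min m M) * of_bool (e i)) * l ^ i) sums T"
    using discounted_sums_fill_interval[OF assms] by blast
  moreover have "min m M + (max m M - min m M) * of_bool b \<in> {m, M}" for b
    by (cases b) (auto simp: min_def max_def)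
  ultimately show "\<exists>w. (\<forall>i. w i \<in> {m, M}) \<and> (\<lambda>i. w i * l ^ i) sums T"
    by (intro exI[of _ "\<lambda>i. min m M + (max m M - min m M) * of_bool (e i)"]) simp
qed

lemma TDS_iff_real:
  "TDS lam t a b \<longleftrightarrow>
   (\<exists>w. (\<forall>i. w i \<in> {real_of_rat a, real_of_rat b}) \<and>
        (\<lambda>i. w i * real_of_rat lam ^ i) sums real_of_rat t)"
proof
  assume "TDS lam t a b"
  then obtain w where w: "\<forall>i. w i \<in> {a, b}"
    and sums: "(\<lambda>i. real_of_rat (w i) * real_of_rat lam ^ i) sums real_of_rat t"
    unfolding TDS_def by blast
  have "\<forall>i. real_of_rat (w i) \<in> {real_of_rat a, real_of_rat b}" using w by auto
  with sums show "\<exists>w. (\<forall>i. w i \<in> {real_of_rat a, real_of_rat b}) \<and>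
      (\<lambda>i. w i * real_of_rat lam ^ i) sums real_of_rat t"
    by (intro exI[of _ "\<lambda>i. real_of_rat (w i)"] conjI)
next
  assume "\<exists>w. (\<forall>i. w i \<in> {real_of_rat a, real_of_rat b}) \<and>
    (\<lambda>i. w i * real_of_rat lam ^ i) sums real_of_rat t"
  then obtain w where w: "\<forall>i. w i \<in> {real_of_rat a, real_of_rat b}"
    and sums: "(\<lambda>i. w i * real_of_rat lam ^ i) sums real_of_rat t"
    by blast
  define v where "v i = (if w i = real_of_rat a then a else b)" for i
  have "\<forall>i. v i \<in> {a, b}" by (simp add: v_def)
  moreover have "w = (\<lambda>i. real_of_rat (v i))" using w by (auto simp: v_def fun_eq_iff)
  ultimately show "TDS lam t a b"
    unfolding TDS_def using sums by (intro exI[of _ v]) simp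
qed

lemma TDS_iff_between:
  assumes "1/2 \<le> lam" and "lam < 1"
  shows "TDS lam t a b \<longleftrightarrow> min a b \<le> t * (1 - lam) \<and> t * (1 - lam) \<le> max a b"
proof -
  have "real_of_rat (1/2) \<le> real_of_rat lam" and "real_of_rat lam < real_of_rat 1"
    using assms by (simp_all only: of_rat_less_eq of_rat_less)
  then have l: "1/2 \<le> real_of_rat lam" "real_of_rat lam < 1"
    by (simp_all add: of_rat_divide)
  have "real_of_rat t * (1 - real_of_rat lam) = real_of_rat (t * (1 - lam))"
    by (simp add: of_rat_mult of_rat_diff)
  moreover have "min (real_of_rat a) (real_of_rat b) = real_of_rat (min a b)"
    and "max (real_of_rat a) (real_of_rat b) = real_of_rat (max a b)"
    by (simp_all add: min_def max_def of_rat_less_eq)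
  ultimately show ?thesis
    unfolding TDS_iff_real two_valued_discounted_sums_iff[OF l] by (simp only: of_rat_less_eq)
qed

section \<open>Total recursive functions\<close>

inductive_cases reval_ZeroE: "reval Zero xs y"
inductive_cases reval_SuccE: "reval Succ xs y"
inductive_cases reval_ProjE: "reval (Proj i) xs y"
inductive_cases reval_CompE: "reval (Comp f gs) xs y"
inductive_cases reval_Prim0E: "reval (Prim f g) (0 # xs) y"
inductive_cases reval_PrimSE: "reval (Prim f g) (Suc n # xs) y"
inductive_cases reval_MnE: "reval (Mn f) xs y"

lemma reval_deterministic: "reval f xs y \<Longrightarrow> reval f xs y' \<Longrightarrow> y = y'"
proof (induction arbitrary: y' rule: reval.induct)
  case (comp xs gs ys f z)
  from comp.prems obtain ys' where ys': "list_all2 (\<lambda>g y. reval g xs y) gs ys'" "reval f ys' y'"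
    by (rule reval_CompE)
  have "ys = ys'"
    using comp.IH(1) ys'(1)
    by (induction gs arbitrary: ys ys') (auto simp: list_all2_Cons1)
  with comp.IH(2) ys'(2) show ?case by blast
next
  case (mn f n xs)
  from mn.prems have zero: "reval f (y' # xs) 0" and pos: "\<forall>m<y'. \<exists>y>0. reval f (m # xs) y"
    by (auto elim: reval_MnE)
  show ?case
  proof (rule linorder_cases[of n y'])
    assume "n < y'"
    with pos mn.IH(1) show ?thesis by fastforce
  next
    assume "y' < n"
    with zero mn.IH(2) show ?thesis by fastforce
  qed
qed (blast elim: reval_ZeroE reval_SuccE reval_ProjE reval_Prim0E reval_PrimSE)+

definition computable :: "nat \<Rightarrow> (nat list \<Rightarrow> nat) \<Rightarrow> bool" where
  "computable k g \<longleftrightarrow> (\<exists>f. \<forall>xs. length xs = k \<longrightarrow> reval f xs (g xs))"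

lemma computable_const: "computable k (\<lambda>xs. c)"
proof -
  have "\<exists>f. \<forall>xs. reval f xs c"
  proof (induction c)
    case 0
    show ?case by (blast intro: reval.zero)
  next
    case (Suc c)
    then obtain f where "\<And>xs. reval f xs c" by blast
    then have "reval (Comp Succ [f]) xs (Suc c)" for xs
      by (auto intro: reval.comp[of xs "[f]" "[c]"] reval.succ)
    then show ?case by blast
  qed
  then show ?thesis unfolding computable_def by blast
qed

lemma computable_proj: "i < k \<Longrightarrow> computable k (\<lambda>xs. xs ! i)"
  unfolding computable_def by (blast intro: reval.proj)

lemma computable_compose:
  assumes "computable (length gs) F" and "\<forall>g\<in>set gs. computable k g"
  shows "computable k (\<lambda>xs. F (map (\<lambda>g. g xs) gs))"
proof -
  obtain f where f: "\<And>ys. length ys = length gs \<Longrightarrow> reval f ys (F ys)"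
    using assms(1) unfolding computable_def by blast
  have "\<exists>fs. list_all2 (\<lambda>h g. \<forall>xs. length xs = k \<longrightarrow> reval h xs (g xs)) fs gs"
    using assms(2) unfolding computable_def
    by (induction gs) (auto simp: list_all2_Cons2)
  then obtain fs where fs: "list_all2 (\<lambda>h g. \<forall>xs. length xs = k \<longrightarrow> reval h xs (g xs)) fs gs"
    by blast
  have "reval (Comp f fs) xs (F (map (\<lambda>g. g xs) gs))" if "length xs = k" for xs
  proof (rule reval.comp)
    show "list_all2 (\<lambda>h y. reval h xs y) fs (map (\<lambda>g. g xs) gs)"
      using fs that by (auto simp: list_all2_map2 elim: list_all2_mono)
  qed (simp add: f)
  then show ?thesis unfolding computable_def by blast
qed

lemma computable_compose1:
  "computable 1 (\<lambda>ys. \<phi> (ys ! 0)) \<Longrightarrow> computable k g \<Longrightarrow> computable k (\<lambda>xs. \<phi> (g xs))"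
  using computable_compose[of "[g]" "\<lambda>ys. \<phi> (ys ! 0)"] by simp

lemma computable_compose2:
  "computable 2 (\<lambda>ys. \<phi> (ys ! 0) (ys ! 1)) \<Longrightarrow> computable k g \<Longrightarrow> computable k h \<Longrightarrow>
   computable k (\<lambda>xs. \<phi> (g xs) (h xs))"
  using computable_compose[of "[g, h]" "\<lambda>ys. \<phi> (ys ! 0) (ys ! 1)"]
  by (simp add: numeral_2_eq_2)

lemma computable_prim_rec:
  assumes "computable k B" and "computable (Suc (Suc k)) G"
    and "\<And>ys. h (0 # ys) = B ys" and "\<And>n ys. h (Suc n # ys) = G (h (n # ys) # n # ys)"
  shows "computable (Suc k) h"
proof -
  obtain f g where f: "\<And>ys. length ys = k \<Longrightarrow> reval f ys (B ys)"
    and g: "\<And>zs. length zs = Suc (Suc k) \<Longrightarrow> reval g zs (G zs)"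
    using assms(1,2) unfolding computable_def by blast
  have "reval (Prim f g) (n # ys) (h (n # ys))" if "length ys = k" for n ys
  proof (induction n)
    case 0
    show ?case by (simp add: assms(3) reval.prim0 f that)
  next
    case (Suc n)
    then show ?case by (simp add: assms(4) reval.primS g that)
  qed
  then have "reval (Prim f g) xs (h xs)" if "length xs = Suc k" for xs
    using that by (cases xs) auto
  then show ?thesis unfolding computable_def by blast
qed

lemma computable_unary_rec:
  assumes "computable 2 (\<lambda>ys. G (ys ! 0) (ys ! 1))"
    and "\<phi> 0 = c" and "\<And>n. \<phi> (Suc n) = G (\<phi> n) n"
  shows "computable 1 (\<lambda>ys. \<phi> (ys ! 0))"
  using computable_prim_rec[of 0 "\<lambda>_. c" "\<lambda>ys. G (ys ! 0) (ys ! 1)"] assms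
  by (simp add: computable_const numeral_2_eq_2)

lemma computable_Suc:
  assumes "computable k g"
  shows "computable k (\<lambda>xs. Suc (g xs))"
proof -
  have "reval Succ ys (Suc (ys ! 0))" if "length ys = 1" for ys
    using that by (cases ys) (auto intro: reval.succ)
  then have "computable 1 (\<lambda>ys. Suc (ys ! 0))" unfolding computable_def by blast
  from computable_compose1[OF this assms] show ?thesis .
qed

lemma computable_add:
  assumes "computable k g" and "computable k h"
  shows "computable k (\<lambda>xs. g xs + h xs)"
proof -
  have "computable 2 (\<lambda>ys. ys ! 0 + ys ! 1)"
    using computable_prim_rec[of 1 "\<lambda>ys. ys ! 0" "\<lambda>zs. Suc (zs ! 0)" "\<lambda>ys. ys ! 0 + ys ! 1"]
    by (simp add: numeral_2_eq_2 computable_proj computable_Suc)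
  from computable_compose2[of "(+)", OF this assms] show ?thesis .
qed

lemma computable_mult:
  assumes "computable k g" and "computable k h"
  shows "computable k (\<lambda>xs. g xs * h xs)"
proof -
  have "computable 2 (\<lambda>ys. ys ! 0 * ys ! 1)"
    using computable_prim_rec[of 1 "\<lambda>_. 0" "\<lambda>zs. zs ! 0 + zs ! 2" "\<lambda>ys. ys ! 0 * ys ! 1"]
    by (simp add: numeral_2_eq_2 numeral_3_eq_3 computable_const computable_add computable_proj)
  from computable_compose2[of "\<lambda>a b. a * b", OF this assms] show ?thesis .
qed

lemma computable_pred:
  assumes "computable k g"
  shows "computable k (\<lambda>xs. g xs - 1)"
proof -
  have "computable 1 (\<lambda>ys. ys ! 0 - 1)"
    by (rule computable_unary_rec[where G = "\<lambda>r n. n"]) (simp_all add: computable_proj)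
  from computable_compose1[OF this assms] show ?thesis .
qed

lemma computable_diff:
  assumes "computable k g" and "computable k h"
  shows "computable k (\<lambda>xs. g xs - h xs)"
proof -
  have "computable 2 (\<lambda>ys. ys ! 1 - ys ! 0)"
    using computable_prim_rec[of 1 "\<lambda>ys. ys ! 0" "\<lambda>zs. zs ! 0 - 1" "\<lambda>ys. ys ! 1 - ys ! 0"]
      computable_pred[OF computable_proj[of 0 3]]
    by (simp add: numeral_2_eq_2 numeral_3_eq_3 computable_proj)
  from computable_compose2[of "\<lambda>a b. b - a", OF this assms(2,1)] show ?thesis .
qed

lemma computable_of_bool_le:
  assumes "computable k g" and "computable k h"
  shows "computable k (\<lambda>xs. of_bool (g xs \<le> h xs))"
proof -
  have "computable k (\<lambda>xs. 1 - (g xs - h xs))"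
    by (intro computable_diff computable_const assms)
  also have "(\<lambda>xs. 1 - (g xs - h xs)) = (\<lambda>xs. of_bool (g xs \<le> h xs))"
    by auto
  finally show ?thesis .
qed

lemma computable_of_bool_conj:
  assumes "computable k (\<lambda>xs. of_bool (P xs))" and "computable k (\<lambda>xs. of_bool (Q xs))"
  shows "computable k (\<lambda>xs. of_bool (P xs \<and> Q xs))"
proof -
  have "computable k (\<lambda>xs. of_bool (P xs) * of_bool (Q xs))"
    by (intro computable_mult assms)
  also have "(\<lambda>xs. of_bool (P xs) * of_bool (Q xs)) = (\<lambda>xs. of_bool (P xs \<and> Q xs) :: nat)"
    by auto
  finally show ?thesis .
qed

lemma computable_of_bool_disj:
  assumes "computable k (\<lambda>xs. of_bool (P xs))" and "computable k (\<lambda>xs. of_bool (Q xs))"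
  shows "computable k (\<lambda>xs. of_bool (P xs \<or> Q xs))"
proof -
  have "computable k (\<lambda>xs. of_bool (P xs) + of_bool (Q xs) - of_bool (P xs) * of_bool (Q xs))"
    by (intro computable_diff computable_add computable_mult assms)
  also have "(\<lambda>xs. of_bool (P xs) + of_bool (Q xs) - of_bool (P xs) * of_bool (Q xs)) =
             (\<lambda>xs. of_bool (P xs \<or> Q xs) :: nat)"
    by auto
  finally show ?thesis .
qed

lemma computable_of_bool_eq:
  assumes "computable k g" and "computable k h"
  shows "computable k (\<lambda>xs. of_bool (g xs = h xs))"
proof -
  have "computable k (\<lambda>xs. of_bool (g xs \<le> h xs \<and> h xs \<le> g xs))"
    by (intro computable_of_bool_conj computable_of_bool_le assms)
  then show ?thesis by (simp add: order_eq_iff)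
qed

lemma computable_mod_2:
  assumes "computable k g"
  shows "computable k (\<lambda>xs. g xs mod 2)"
proof -
  have "computable 1 (\<lambda>ys. ys ! 0 mod 2)"
    by (rule computable_unary_rec[where G = "\<lambda>r n. 1 - r"])
      (simp_all add: computable_diff computable_const computable_proj mod_Suc)
  from computable_compose1[OF this assms] show ?thesis .
qed

lemma computable_div_2:
  assumes "computable k g"
  shows "computable k (\<lambda>xs. g xs div 2)"
proof -
  have "computable 1 (\<lambda>ys. ys ! 0 div 2)"
    by (rule computable_unary_rec[where G = "\<lambda>r n. r + n mod 2"])
      (simp add: computable_add computable_mod_2 computable_proj, simp, presburger)
  from computable_compose1[OF this assms] show ?thesis .
qed

lemma computable_triangle:
  assumes "computable k g"
  shows "computable k (\<lambda>xs. triangle (g xs))"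
proof -
  have "computable 1 (\<lambda>ys. triangle (ys ! 0))"
    by (rule computable_unary_rec[where G = "\<lambda>r n. r + Suc n"])
      (simp_all add: computable_add computable_Suc computable_proj)
  from computable_compose1[OF this assms] show ?thesis .
qed

primrec diagonal :: "nat \<Rightarrow> nat" where
  "diagonal 0 = 0"
| "diagonal (Suc m) = diagonal m + of_bool (triangle (Suc (diagonal m)) = Suc m)"

lemma computable_diagonal:
  assumes "computable k g"
  shows "computable k (\<lambda>xs. diagonal (g xs))"
proof -
  have "computable 1 (\<lambda>ys. diagonal (ys ! 0))"
    by (rule computable_unary_rec[where G = "\<lambda>r n. r + of_bool (triangle (Suc r) = Suc n)"])
      (simp_all add: computable_add computable_of_bool_eq computable_triangle computable_Suc
        computable_proj)
  from computable_compose1[OF this assms] show ?thesis .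
qed

lemma diagonal_bounds: "triangle (diagonal m) \<le> m \<and> m < triangle (Suc (diagonal m))"
  by (induction m) auto

lemma triangle_mono: "i \<le> j \<Longrightarrow> triangle i \<le> triangle j"
  by (induction j rule: dec_induct) auto

lemma diagonal_eqI:
  assumes "triangle d \<le> m" and "m < triangle (Suc d)"
  shows "diagonal m = d"
proof (rule linorder_cases[of "diagonal m" d])
  assume "diagonal m < d"
  then have "triangle (Suc (diagonal m)) \<le> triangle d" by (intro triangle_mono) simp
  with diagonal_bounds[of m] assms show ?thesis by simp
next
  assume "d < diagonal m"
  then have "triangle (Suc d) \<le> triangle (diagonal m)" by (intro triangle_mono) simp
  with diagonal_bounds[of m] assms show ?thesis by simp
qed

lemma diagonal_prod_encode: "diagonal (prod_encode (x, y)) = x + y"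
  by (rule diagonal_eqI) (auto simp: prod_encode_def)

lemma prod_decode_diagonal:
  "prod_decode n = (n - triangle (diagonal n), diagonal n - (n - triangle (diagonal n)))"
proof -
  obtain x y where xy: "prod_decode n = (x, y)" by fastforce
  then have n: "n = prod_encode (x, y)" by (metis prod_decode_inverse)
  then have "diagonal n = x + y" by (simp add: diagonal_prod_encode)
  then show ?thesis unfolding xy using n by (simp add: prod_encode_def)
qed

lemma computable_fst_prod_decode:
  "computable k g \<Longrightarrow> computable k (\<lambda>xs. fst (prod_decode (g xs)))"
  unfolding prod_decode_diagonal
  by (simp add: computable_diff computable_triangle computable_diagonal)

lemma computable_snd_prod_decode:
  "computable k g \<Longrightarrow> computable k (\<lambda>xs. snd (prod_decode (g xs)))"
  unfolding prod_decode_diagonal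
  by (simp add: computable_diff computable_triangle computable_diagonal)

definition computable_int :: "nat \<Rightarrow> (nat list \<Rightarrow> int) \<Rightarrow> bool" where
  "computable_int k g \<longleftrightarrow> computable k (\<lambda>xs. nat (g xs)) \<and> computable k (\<lambda>xs. nat (- g xs))"

lemma computable_int_decode:
  assumes "computable k g"
  shows "computable_int k (\<lambda>xs. int_decode (g xs))"
proof -
  have parts: "nat (int_decode z) = (1 - z mod 2) * (z div 2)"
    "nat (- int_decode z) = z mod 2 * Suc (z div 2)" for z
    by (auto simp: int_decode_def sum_decode_def elim: oddE)
  show ?thesis
    unfolding computable_int_def parts
    by (intro conjI computable_mult computable_diff computable_Suc computable_const
        computable_mod_2 computable_div_2 assms)
qed

lemma computable_int_uminus: "computable_int k g \<Longrightarrow> computable_int k (\<lambda>xs. - g xs)"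
  unfolding computable_int_def by simp

lemma computable_int_add:
  assumes "computable_int k g" and "computable_int k h"
  shows "computable_int k (\<lambda>xs. g xs + h xs)"
proof -
  have "nat (x + y) = (nat x + nat y) - (nat (- x) + nat (- y))"
    and "nat (- (x + y)) = (nat (- x) + nat (- y)) - (nat x + nat y)" for x y :: int
    by linarith+
  with assms show ?thesis
    unfolding computable_int_def by (simp add: computable_diff computable_add)
qed

lemma computable_int_diff:
  "computable_int k g \<Longrightarrow> computable_int k h \<Longrightarrow> computable_int k (\<lambda>xs. g xs - h xs)"
  using computable_int_add[OF _ computable_int_uminus] by simp

lemma nat_mult_sign_split:
  fixes x y :: int
  shows "nat (x * y) = nat x * nat y + nat (- x) * nat (- y)"
proof (cases "0 \<le> x"; cases "0 \<le> y")
  assume "0 \<le> x" and "0 \<le> y"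
  then show ?thesis by (simp add: nat_mult_distrib)
next
  assume "\<not> 0 \<le> x" and "\<not> 0 \<le> y"
  then show ?thesis using nat_mult_distrib[of "- x" "- y"] by simp
qed (simp_all add: mult_nonneg_nonpos mult_nonpos_nonneg)

lemma computable_int_mult:
  assumes "computable_int k g" and "computable_int k h"
  shows "computable_int k (\<lambda>xs. g xs * h xs)"
proof -
  have "nat (- (x * y)) = nat x * nat (- y) + nat (- x) * nat y" for x y :: int
    using nat_mult_sign_split[of x "- y"] by (simp add: mult.commute)
  with assms show ?thesis
    unfolding computable_int_def by (simp add: nat_mult_sign_split computable_mult computable_add)
qed

lemma computable_of_bool_int_le:
  assumes "computable_int k g" and "computable_int k h"
  shows "computable k (\<lambda>xs. of_bool (g xs \<le> h xs))"
proof -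
  have "computable k (\<lambda>xs. 1 - nat (g xs - h xs))"
    using computable_int_diff[OF assms] unfolding computable_int_def
    by (simp add: computable_diff computable_const)
  also have "(\<lambda>xs. 1 - nat (g xs - h xs)) = (\<lambda>xs. of_bool (g xs \<le> h xs))"
    by auto
  finally show ?thesis .
qed

section \<open>The decision procedure\<close>

fun frac_le :: "int \<times> int \<Rightarrow> int \<times> int \<Rightarrow> bool" where
  "frac_le (a, b) (c, d) \<longleftrightarrow> a * d \<le> c * b"

lemma frac_le_iff:
  assumes "0 < b" and "0 < d"
  shows "frac_le (a, b) (c, d) \<longleftrightarrow> (of_int a / of_int b :: rat) \<le> of_int c / of_int d"
proof -
  have "(of_int a / of_int b :: rat) \<le> of_int c / of_int d \<longleftrightarrow>
        (of_int a * of_int d :: rat) \<le> of_int c * of_int b"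
    using assms by (simp add: divide_le_eq le_divide_eq mult.commute mult.left_commute)
  then show ?thesis by (simp flip: of_int_mult)
qed

(* With (p, q) and (r, s) the fractions of lambda and t, z is the fraction of t (1 - lambda). *)
fun tds_criterion :: "int \<times> int \<Rightarrow> int \<times> int \<Rightarrow> int \<times> int \<Rightarrow> int \<times> int \<Rightarrow> bool" where
  "tds_criterion (p, q) (r, s) a b =
     (let z = (r * (q - p), s * q) in (frac_le a z \<or> frac_le b z) \<and> (frac_le z a \<or> frac_le z b))"

lemma tds_criterion_iff_TDS:
  assumes "1/2 \<le> lam" and "lam < 1"
  shows "tds_criterion (quotient_of lam) (quotient_of t) (quotient_of a) (quotient_of b) \<longleftrightarrow>
         TDS lam t a b"
proof -
  obtain p q r s where lam: "quotient_of lam = (p, q)" and t: "quotient_of t = (r, s)"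
    by (cases "quotient_of lam", cases "quotient_of t") blast
  have pos: "0 < q" "0 < s" using lam t by (simp_all add: quotient_of_denom_pos)
  have z: "t * (1 - lam) = of_int (r * (q - p)) / of_int (s * q)"
    unfolding quotient_of_div[OF lam] quotient_of_div[OF t] using pos by (simp add: field_simps)
  have "frac_le (quotient_of x) (r * (q - p), s * q) \<longleftrightarrow> x \<le> t * (1 - lam)"
    and "frac_le (r * (q - p), s * q) (quotient_of x) \<longleftrightarrow> t * (1 - lam) \<le> x" for x
  proof -
    obtain c d where x: "quotient_of x = (c, d)" by fastforce
    then have "0 < d" and "x = of_int c / of_int d"
      by (simp_all add: quotient_of_denom_pos quotient_of_div)
    moreover have "0 < s * q" using pos by simp
    ultimately show "frac_le (quotient_of x) (r * (q - p), s * q) \<longleftrightarrow> x \<le> t * (1 - lam)"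
      and "frac_le (r * (q - p), s * q) (quotient_of x) \<longleftrightarrow> t * (1 - lam) \<le> x"
      unfolding x z by (simp_all only: frac_le_iff)
  qed
  then show ?thesis
    unfolding lam t tds_criterion.simps Let_def TDS_iff_between[OF assms]
    by (simp add: min_le_iff_disj le_max_iff_disj)
qed

definition rat_decode :: "nat \<Rightarrow> int \<times> int" where
  "rat_decode n = (int_decode (fst (prod_decode n)), int_decode (snd (prod_decode n)))"

definition tds_decide :: "nat \<Rightarrow> nat" where
  "tds_decide n =
     (let (l, n) = prod_decode n; (t, n) = prod_decode n; (a, b) = prod_decode n in
      of_bool (tds_criterion (rat_decode l) (rat_decode t) (rat_decode a) (rat_decode b)))"

lemma rat_decode_rat_code: "rat_decode (rat_code x) = quotient_of x"
  by (simp add: rat_decode_def rat_code_def)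

lemma tds_decide_instance_code:
  "tds_decide (instance_code lam t a b) =
   of_bool (tds_criterion (quotient_of lam) (quotient_of t) (quotient_of a) (quotient_of b))"
  by (simp add: tds_decide_def instance_code_def rat_decode_rat_code del: tds_criterion.simps)

lemma tds_decide_0_or_1: "tds_decide n = 0 \<or> tds_decide n = 1"
  by (simp add: tds_decide_def split_beta)

lemma computable_tds_decide: "computable 1 (\<lambda>xs. tds_decide (xs ! 0))"
  unfolding tds_decide_def rat_decode_def Let_def split_beta tds_criterion.simps frac_le.simps
  by (intro computable_of_bool_conj computable_of_bool_disj computable_of_bool_int_le
      computable_int_mult computable_int_diff computable_int_decode
      computable_fst_prod_decode computable_snd_prod_decode computable_proj) simp_all

theorem theorem8:
  shows "\<exists>f. total_decider f \<and>
           (\<forall>lam t a b. 1/2 \<le> lam \<and> lam < 1 \<longrightarrow>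
              (reval f [instance_code lam t a b] 1 \<longleftrightarrow> TDS lam t a b))"
proof -
  obtain f where "\<forall>xs. length xs = 1 \<longrightarrow> reval f xs (tds_decide (xs ! 0))"
    using computable_tds_decide unfolding computable_def by blast
  then have f: "reval f [n] (tds_decide n)" for n
    by (auto dest: spec[of _ "[n]"])
  have "total_decider f"
    unfolding total_decider_def using f tds_decide_0_or_1 by metis
  moreover have "reval f [instance_code lam t a b] 1 \<longleftrightarrow> TDS lam t a b"
    if "1/2 \<le> lam" and "lam < 1" for lam t a b
  proof -
    have "reval f [instance_code lam t a b] 1 \<longleftrightarrow> tds_decide (instance_code lam t a b) = 1"
      using f reval_deterministic by metis
    also have "\<dots> \<longleftrightarrow> TDS lam t a b"
      by (simp add: tds_decide_instance_code tds_criterion_iff_TDS[OF that])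
    finally show ?thesis .
  qed
  ultimately show ?thesis by blast
qed

end
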